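(* For positive integers $k_1,\dots,k_l$ with $k_1\ge2$, \[ \begin{aligned} &\sum_{i=1}^l\sum_{j=0}^{k_i-2}\zeta_q^t(k_1,\dots,k_{i-1},k_i-j,j+1,k_{i+1},\dots,k_l)\\ &=\sum_{i=1}^l\{1+(k_i-2+\delta_{i,l})t\}\,\zeta_q^t(k_1,\dots,k_{i-1},k_i+1,k_{i+1},\dots,k_l) +t(t-1)\sum_{i=1}^{l-1}\zeta_q^t(k_1,\dots,k_{i-1},k_i+k_{i+1}+1,k_{i+2},\dots,k_l)\\ &\quad+(1-q)\Bigl\{\sum_{i=1}^l t(k_i-1)\,\zeta_q^t(k_1,\dots,k_l)+t(t-1)\sum_{i=1}^{l-1}\zeta_q^t(k_1,\dots,k_{i-1},k_i+k_{i+1},k_{i+2},\dots,k_l)\Bigr\}, \end{aligned} \] where $\delta_{i,l}$ is the Kronecker delta.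
   Context: Let $q$, $t$ be formal parameters and $[n]=\frac{1-q^n}{1-q}$. For positive integers $k_1,\dots,k_l$ with $k_1\ge 2$ put $\zeta_q(k_1,\dots,k_l)=\sum_{m_1>m_2>\cdots>m_l\ge1}\prod_{a=1}^l \frac{q^{(k_a-1)m_a}}{[m_a]^{k_a}}\in\mathbb{Q}[[q]]$. The weight of an index is the sum of its entries and its depth is the number of entries. Define $\zeta_q^t(k_1,\dots,k_l)=\sum'_{\mathbf p}(1-q)^{k-\mathrm{wt}(\mathbf p)}\zeta_q(\mathbf p)\,t^{l-\mathrm{dep}(\mathbf p)}\in\mathbb{Q}[[q]][t]$, where $k=k_1+\cdots+k_l$ and $\mathbf p$ runs over all indices of the form $(k_1\ \square\ k_2\ \square\cdots\square\ k_l)$ with each $\square$ filled by "," (comma), "$+$" or "$-1+$". An inner sum $\sum_{j=0}^{k_i-2}$ is empty when $k_i=1$. *)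

theory Defs
  imports "HOL-Computational_Algebra.Formal_Power_Series" "HOL-Computational_Algebra.Polynomial"
    "HOL-Analysis.Infinite_Sum"
begin

definition qint :: "nat \<Rightarrow> rat fps" where
  "qint n = (\<Sum>i<n. fps_X ^ i)"

definition zq_term :: "nat list \<Rightarrow> nat list \<Rightarrow> rat fps" where
  "zq_term ks ms = (\<Prod>a<length ks. fps_X ^ ((ks!a - 1) * ms!a) * inverse (qint (ms!a) ^ (ks!a)))"

definition zq_dom :: "nat \<Rightarrow> nat list set" where
  "zq_dom l = {ms. length ms = l \<and> sorted_wrt (>) ms \<and> (\<forall>m\<in>set ms. 1 \<le> m)}"

text \<open>zeta_q as an (unconditionally convergent, q-adic) infinite sum in Q[[q]].\<close>
definition zeta_q :: "nat list \<Rightarrow> rat fps" where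
  "zeta_q ks = infsum (zq_term ks) (zq_dom (length ks))"

datatype box = Comma | Plus | MinusPlus

text \<open>merge c ks os: the index (c box_1 k_1 box_2 k_2 ...) obtained by filling the boxes.\<close>
fun merge :: "nat \<Rightarrow> nat list \<Rightarrow> box list \<Rightarrow> nat list" where
  "merge c [] os = [c]"
| "merge c (k # ks) [] = [c]"
| "merge c (k # ks) (Comma # os) = c # merge k ks os"
| "merge c (k # ks) (Plus # os) = merge (c + k) ks os"
| "merge c (k # ks) (MinusPlus # os) = merge (c - 1 + k) ks os"

definition tvar :: "rat fps poly" where
  "tvar = [:0, 1:]"

definition zeta_qt :: "nat list \<Rightarrow> rat fps poly" where
  "zeta_qt ks =
    (\<Sum>os\<in>{os. length os = length ks - 1}.
       (let p = merge (hd ks) (tl ks) os in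
        [: (1 - fps_X) ^ (sum_list ks - sum_list p) * zeta_q p :]
          * tvar ^ (length ks - length p)))"

end

(*
  Write f_k(m) = q^((k-1)m) / [m]^k.  Then zeta_q^t(k_1, ..., k_l) is the sum of
  f_k_1(m_1) ... f_k_l(m_l) over m_1 >= ... >= m_l >= 1 with a factor t for every equality
  m_a = m_(a+1): the boxes "+" and "-1+" come from f_c(m) f_k(m) = f_(c+k)(m) + (1-q) f_(c+k-1)(m).

  Fix the top index m_1 = n.  Splitting k_i into (k_i - j, j + 1) produces the sums
  sum_j f_(k-j)(n) f_(j+1)(p), p < n, which telescope by the partial fraction identity
  1/[n] * q^(n-p)/[n-p] = 1/[p] * (1/[n-p] - 1/[n]).  By induction on the depth, the two sides
  of the theorem therefore agree at each level n up to an explicit error term.  Summed over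
  n <= M these errors total sum_p U(p) (D(M) - D(M-p)) with D(M) = sum_(d<=M) q^d/[d], and U(p)
  is of order q^p, so the total is of order q^(M+1).  The truncations at m_1 <= M approximate
  every zeta_q^t modulo q^(M+1) as well (here k_1 >= 2 is used), so the two sides agree
  modulo every power of q.
*)

theory Submission
  imports Defs
begin

unbundle fps_syntax

section \<open>Divisibility by powers of \<open>q\<close>\<close>

lemma fps_X_power_dvd_if_nth_eq_0:
  fixes f :: "'a::field fps"
  assumes "\<And>i. i < N \<Longrightarrow> f $ i = 0"
  shows "fps_X ^ N dvd f"
  using assms by (cases "f = 0") (simp_all add: fps_dvd_iff fps_X_power_subdegree subdegree_geI)

lemma fps_eq_0_if_X_power_dvd:
  fixes f :: "'a::field fps"
  assumes "\<And>N. fps_X ^ N dvd f"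
  shows "f = 0"
proof (rule ccontr)
  assume "f \<noteq> 0"
  then have "subdegree (fps_X ^ Suc (subdegree f) :: 'a fps) \<le> subdegree f"
    using assms dvd_imp_subdegree_le by blast
  then show False
    by (simp add: fps_X_power_subdegree)
qed

lemma fps_poly_eq_0_if_X_power_dvd:
  fixes P :: "'a::field fps poly"
  assumes "\<And>N. [:fps_X ^ N:] dvd P"
  shows "P = 0"
proof (rule poly_eqI)
  fix n
  have "fps_X ^ N dvd coeff P n" for N
    using assms[of N] by (simp add: const_poly_dvd_iff)
  then have "coeff P n = 0"
    by (rule fps_eq_0_if_X_power_dvd)
  then show "coeff P n = coeff 0 n"
    by simp
qed

lemma const_X_power_dvd: "N \<le> K \<Longrightarrow> [:fps_X ^ N:] dvd [:fps_X ^ K * (a :: 'a::field fps):]"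
  by (simp add: le_imp_power_dvd)

section \<open>\<open>q\<close>-integers and the partial fraction identity\<close>

definition qinv :: "nat \<Rightarrow> rat fps" where
  "qinv n = inverse (qint n)"

definition qfrac :: "nat \<Rightarrow> rat fps" where
  "qfrac n = fps_X ^ n * qinv n"

definition zq_factor :: "nat \<Rightarrow> nat \<Rightarrow> rat fps" where
  "zq_factor k n = fps_X ^ ((k - 1) * n) * inverse (qint n ^ k)"

definition one_minus_q :: "rat fps" where
  "one_minus_q = 1 - fps_X"

lemma qint_nth_0: "n \<ge> 1 \<Longrightarrow> qint n $ 0 = 1"
  by (cases n) (auto simp: qint_def fps_sum_nth)

lemma qint_mult_qinv: "n \<ge> 1 \<Longrightarrow> qint n * qinv n = 1"
  unfolding qinv_def by (rule inverse_mult_eq_1') (simp add: qint_nth_0)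

lemma qint_add: "qint (a + b) = qint a + fps_X ^ a * qint b"
  by (induction b) (simp_all add: qint_def algebra_simps power_add)

lemma qinv_0: "qinv 0 = 0"
  by (simp add: qinv_def qint_def)

lemma qfrac_0: "qfrac 0 = 0"
  by (simp add: qfrac_def qinv_0)

lemma zq_factor_0: "k \<ge> 1 \<Longrightarrow> zq_factor k 0 = 0"
  by (cases k) (simp_all add: zq_factor_def qint_def)

lemma qinv_eq: "n \<ge> 1 \<Longrightarrow> qinv n = one_minus_q + qfrac n"
proof -
  assume n: "n \<ge> 1"
  have "qinv n - qfrac n = (1 - fps_X ^ n) * qinv n"
    by (simp add: qfrac_def algebra_simps)
  also have "\<dots> = one_minus_q * (qint n * qinv n)"
    unfolding one_diff_power_eq one_minus_q_def qint_def by (simp add: mult.assoc)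
  finally show ?thesis using qint_mult_qinv[OF n] by (simp add: algebra_simps)
qed

lemma qfrac_diff: "p \<ge> 1 \<Longrightarrow> n \<ge> 1 \<Longrightarrow> qfrac p - qfrac n = qinv p - qinv n"
  by (simp add: qinv_eq)

lemma zq_factor_eq: "k \<ge> 1 \<Longrightarrow> zq_factor k n = qinv n * qfrac n ^ (k - 1)"
  by (cases k) (simp_all add: zq_factor_def qfrac_def qinv_def fps_inverse_power fps_inverse_mult
      power_mult_distrib power_mult[symmetric] mult_ac)

text \<open>This follows from \<open>[n] = [n - p] + q\<^sup>n\<^sup>-\<^sup>p [p]\<close>.\<close>
lemma qinv_partial_fraction:
  assumes "1 \<le> p" "p < n"
  shows "qinv n * qfrac (n - p) = qinv p * (qinv (n - p) - qinv n)"
proof -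
  have split: "qint n = qint (n - p) + fps_X ^ (n - p) * qint p"
    using qint_add[of "n - p" p] assms by simp
  have units: "qint n * qinv n = 1" "qint p * qinv p = 1" "qint (n - p) * qinv (n - p) = 1"
    using assms by (auto intro!: qint_mult_qinv)
  have "qinv p * (qinv (n - p) - qinv n) = qinv p * qinv (n - p) * qinv n * (qint n - qint (n - p))"
    using units by (simp add: algebra_simps)
  also have "\<dots> = qinv n * qfrac (n - p)"
    using units split by (simp add: qfrac_def algebra_simps)
  finally show ?thesis by simp
qed

lemma qfrac_diff_mult_qinv_diff:
  assumes "1 \<le> p" "p < n"
  shows "(qfrac p - qfrac n) * (qinv (n - p) - qinv n) = qinv n * qfrac n"
proof -
  have "(qfrac p - qfrac n) * (qinv (n - p) - qinv n) = (qinv p - qinv n) * (qinv (n - p) - qinv n)"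
    using qfrac_diff[of p n] assms by simp
  also have "\<dots> = qinv p * (qinv (n - p) - qinv n) - qinv n * qinv (n - p) + qinv n * qinv n"
    by (simp add: algebra_simps)
  also have "\<dots> = qinv n * (qfrac (n - p) - qinv (n - p) + qinv n)"
    using qinv_partial_fraction[OF assms] by (simp add: algebra_simps)
  also have "qfrac (n - p) - qinv (n - p) + qinv n = qfrac n"
    using qinv_eq[of "n - p"] qinv_eq[of n] assms by simp
  finally show ?thesis .
qed

lemma sum_qinv_qfrac_power_products:
  assumes "1 \<le> p" "p < n"
  shows "(\<Sum>j<k. (qinv n * qfrac n ^ (k - j)) * (qinv p * qfrac p ^ j))
       = qinv p * qfrac p ^ k * (qinv (n - p) - qinv n) - qinv n * qfrac n ^ k * qfrac (n - p)"
proof (induction k)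
  case 0
  then show ?case using qinv_partial_fraction[OF assms] by simp
next
  case (Suc k)
  have "(\<Sum>j<Suc k. (qinv n * qfrac n ^ (Suc k - j)) * (qinv p * qfrac p ^ j))
      = qfrac n * (\<Sum>j<k. (qinv n * qfrac n ^ (k - j)) * (qinv p * qfrac p ^ j))
        + qinv n * qfrac n * (qinv p * qfrac p ^ k)"
    unfolding sum_distrib_left by (simp add: Suc_diff_le mult_ac)
  also have "\<dots> = qfrac n * (qinv p * qfrac p ^ k * (qinv (n - p) - qinv n)
        - qinv n * qfrac n ^ k * qfrac (n - p)) + qinv p * qfrac p ^ k * (qinv n * qfrac n)"
    by (simp only: Suc.IH) (simp add: algebra_simps)
  also have "qinv n * qfrac n = (qfrac p - qfrac n) * (qinv (n - p) - qinv n)"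
    using qfrac_diff_mult_qinv_diff[OF assms] by simp
  finally show ?case by (simp add: algebra_simps)
qed

lemma sum_split_zq_factor:
  assumes "1 \<le> p" "p < n" "k \<ge> 1"
  shows "(\<Sum>j<k - 1. zq_factor (k - j) n * zq_factor (Suc j) p)
       = qfrac (n - p) * zq_factor k p - zq_factor k n * qfrac (n - p) - qfrac n * zq_factor k p"
proof -
  have "(\<Sum>j<k - 1. zq_factor (k - j) n * zq_factor (Suc j) p)
      = (\<Sum>j<k - 1. (qinv n * qfrac n ^ (k - 1 - j)) * (qinv p * qfrac p ^ j))"
    using assms by (intro sum.cong) (auto simp: zq_factor_eq)
  also have "\<dots> = qinv p * qfrac p ^ (k - 1) * (qinv (n - p) - qinv n)
      - qinv n * qfrac n ^ (k - 1) * qfrac (n - p)"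
    by (rule sum_qinv_qfrac_power_products[OF assms(1,2)])
  also have "qinv (n - p) - qinv n = qfrac (n - p) - qfrac n"
    using assms qfrac_diff[of "n - p" n] by simp
  finally show ?thesis
    using assms by (simp add: zq_factor_eq algebra_simps)
qed

lemma sum_split_zq_factor_diag:
  assumes "k \<ge> 1"
  shows "(\<Sum>j<k - 1. zq_factor (k - j) n * zq_factor (Suc j) n) = of_nat (k - 1) * qinv n * zq_factor k n"
proof (cases "n = 0")
  case True
  then show ?thesis using assms by (simp add: zq_factor_0)
next
  case False
  have "zq_factor (k - j) n * zq_factor (Suc j) n = qinv n * zq_factor k n" if "j < k - 1" for j
  proof -
    have "qfrac n ^ (k - Suc j) * qfrac n ^ j = qfrac n ^ (k - 1)"
      using that by (simp flip: power_add)
    then show ?thesis using assms that by (simp add: zq_factor_eq mult_ac)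
  qed
  then show ?thesis by simp
qed

lemma zq_factor_Suc: "k \<ge> 1 \<Longrightarrow> zq_factor (Suc k) n = qfrac n * zq_factor k n"
  by (cases k) (simp_all add: zq_factor_eq)

lemma qinv_mult_zq_factor:
  assumes "k \<ge> 1"
  shows "qinv n * zq_factor k n = zq_factor (Suc k) n + one_minus_q * zq_factor k n"
proof (cases "n = 0")
  case False
  then show ?thesis
    using assms by (simp add: zq_factor_Suc qinv_eq algebra_simps)
qed (use assms in \<open>simp add: zq_factor_0 qinv_0\<close>)

lemma zq_factor_mult:
  assumes "c \<ge> 1" "k \<ge> 1"
  shows "zq_factor c n * zq_factor k n = zq_factor (c + k) n + one_minus_q * zq_factor (c + k - 1) n"
proof (cases "n = 0")
  case False
  have "zq_factor c n * zq_factor k n = qinv n * zq_factor (c + k - 1) n"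
    using assms by (simp add: zq_factor_eq power_add[symmetric] mult_ac)
  also have "\<dots> = zq_factor (c + k) n + one_minus_q * zq_factor (c + k - 1) n"
    using qinv_mult_zq_factor[of "c + k - 1" n] assms by simp
  finally show ?thesis .
qed (use assms in \<open>simp add: zq_factor_0\<close>)

lemma qfrac_mult_zq_factor_mult:
  "a \<ge> 1 \<Longrightarrow> b \<ge> 1 \<Longrightarrow> qfrac n * zq_factor a n * zq_factor b n
     = zq_factor (a + b + 1) n + one_minus_q * zq_factor (a + b) n"
  using zq_factor_mult[of a b n] zq_factor_Suc[of "a + b" n] zq_factor_Suc[of "a + b - 1" n]
  by (simp add: algebra_simps)

section \<open>Sequences of polynomials in \<open>t\<close>\<close>

text \<open>Constant polynomials in \<open>t\<close>, kept as opaque constants so that ring normalisation treats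
  them as atoms (the simplifier would otherwise turn \<open>[:a:] * p\<close> into \<open>smult a p\<close>).\<close>

definition c_qfrac :: "nat \<Rightarrow> rat fps poly" where
  "c_qfrac n = [:qfrac n:]"

definition c_factor :: "nat \<Rightarrow> nat \<Rightarrow> rat fps poly" where
  "c_factor k n = [:zq_factor k n:]"

definition c_one_minus_q :: "rat fps poly" where
  "c_one_minus_q = [:one_minus_q:]"

lemma sum_split_c_factor:
  assumes "1 \<le> p" "p < n" "k \<ge> 1"
  shows "(\<Sum>j<k - 1. c_factor (k - j) n * c_factor (Suc j) p)
       = c_qfrac (n - p) * c_factor k p - c_factor k n * c_qfrac (n - p) - c_qfrac n * c_factor k p"
  using sum_split_zq_factor[OF assms]
  by (simp only: c_factor_def c_qfrac_def mult_to_poly diff_to_poly sum_to_poly)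

lemma sum_split_c_factor_diag:
  assumes "k \<ge> 1"
  shows "(\<Sum>j<k - 1. c_factor (k - j) n * c_factor (Suc j) n)
       = of_nat (k - 1) * (c_qfrac n * c_factor k n + c_one_minus_q * c_factor k n)"
  using sum_split_zq_factor_diag[OF assms, of n] qinv_mult_zq_factor[OF assms, of n]
    zq_factor_Suc[OF assms, of n]
  by (simp only: c_factor_def c_qfrac_def c_one_minus_q_def mult_to_poly sum_to_poly of_nat_poly
      add_pCons add_0_left mult.assoc)

lemma c_factor_Suc: "k \<ge> 1 \<Longrightarrow> c_factor (Suc k) n = c_qfrac n * c_factor k n"
  by (simp add: c_factor_def c_qfrac_def zq_factor_Suc)

lemma c_factor_mult:
  "c \<ge> 1 \<Longrightarrow> k \<ge> 1 \<Longrightarrow> c_factor c n * c_factor k n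
     = c_factor (c + k) n + c_one_minus_q * c_factor (c + k - 1) n"
  using zq_factor_mult[of c k n]
  by (simp only: c_factor_def c_one_minus_q_def mult_to_poly add_pCons add_0_left)

lemma c_qfrac_mult_c_factor_mult:
  "a \<ge> 1 \<Longrightarrow> b \<ge> 1 \<Longrightarrow> c_qfrac n * c_factor a n * c_factor b n
     = c_factor (a + b + 1) n + c_one_minus_q * c_factor (a + b) n"
  using qfrac_mult_zq_factor_mult[of a b n]
  by (simp only: c_factor_def c_qfrac_def c_one_minus_q_def mult_to_poly add_pCons add_0_left)

definition sum_below :: "(nat \<Rightarrow> 'a::comm_monoid_add) \<Rightarrow> nat \<Rightarrow> 'a" where
  "sum_below v n = (\<Sum>p\<in>{1..<n}. v p)"

definition tsum_upto :: "(nat \<Rightarrow> rat fps poly) \<Rightarrow> nat \<Rightarrow> rat fps poly" where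
  "tsum_upto v n = sum_below v n + tvar * v n"

definition qfrac_conv :: "(nat \<Rightarrow> rat fps poly) \<Rightarrow> nat \<Rightarrow> rat fps poly" where
  "qfrac_conv v n = (\<Sum>p\<in>{1..<n}. c_qfrac (n - p) * v p)"

definition qfrac_sum :: "nat \<Rightarrow> rat fps poly" where
  "qfrac_sum n = (\<Sum>d\<in>{1..n}. c_qfrac d)"

lemma qfrac_sum_0: "qfrac_sum 0 = 0"
  by (simp add: qfrac_sum_def)

lemma qfrac_sum_Suc: "qfrac_sum (Suc n) = qfrac_sum n + c_qfrac (Suc n)"
  by (simp add: qfrac_sum_def)

lemma sum_below_0: "sum_below v 0 = 0"
  by (simp add: sum_below_def)

lemma sum_below_Suc: "sum_below v (Suc n) = sum_below v n + (if n = 0 then 0 else v n)"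
  by (cases n) (auto simp: sum_below_def)

lemma sum_below_add: "sum_below (\<lambda>m. f m + g m) n = sum_below f n + sum_below g n"
  by (simp add: sum_below_def sum.distrib)

lemma sum_below_diff:
  "sum_below (\<lambda>m. f m - g m) n = sum_below f n - (sum_below g n :: 'a::ab_group_add)"
  by (simp add: sum_below_def sum_subtractf)

lemma sum_below_mult:
  "sum_below (\<lambda>m. c * f m) n = c * (sum_below f n :: 'a::semiring_0)"
  by (simp add: sum_below_def sum_distrib_left)

lemma sum_below_sum: "sum_below (\<lambda>m. \<Sum>i\<in>I. f i m) n = (\<Sum>i\<in>I. sum_below (f i) n)"
  by (simp add: sum_below_def sum.swap[of _ I])

lemma tsum_upto_add: "tsum_upto (\<lambda>m. f m + g m) n = tsum_upto f n + tsum_upto g n"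
  by (simp add: tsum_upto_def sum_below_add algebra_simps)

lemma tsum_upto_diff: "tsum_upto (\<lambda>m. f m - g m) n = tsum_upto f n - tsum_upto g n"
  by (simp add: tsum_upto_def sum_below_diff algebra_simps)

lemma tsum_upto_mult: "tsum_upto (\<lambda>m. c * f m) n = c * tsum_upto f n"
  by (simp add: tsum_upto_def sum_below_mult algebra_simps)

lemma tsum_upto_sum: "tsum_upto (\<lambda>m. \<Sum>i\<in>I. f i m) n = (\<Sum>i\<in>I. tsum_upto (f i) n)"
  by (simp add: tsum_upto_def sum_below_sum sum.distrib sum_distrib_left)

lemma qfrac_conv_add: "qfrac_conv (\<lambda>m. f m + g m) n = qfrac_conv f n + qfrac_conv g n"
  by (simp add: qfrac_conv_def sum.distrib algebra_simps)

lemma qfrac_conv_mult: "qfrac_conv (\<lambda>m. c * f m) n = c * qfrac_conv f n"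
  by (simp add: qfrac_conv_def sum_distrib_left algebra_simps)

lemma sum_triangle_swap:
  "(\<Sum>p\<in>{1..<n}. \<Sum>r\<in>{1..<p}. g p r) = (\<Sum>r\<in>{1..<n}. \<Sum>p\<in>{Suc r..<n}. g p r)"
proof (induction n)
  case (Suc n)
  have "(\<Sum>r\<in>{1..<Suc n}. \<Sum>p\<in>{Suc r..<Suc n}. g p r)
      = (\<Sum>r\<in>{1..<n}. \<Sum>p\<in>{Suc r..<Suc n}. g p r)"
    by (cases "n = 0") simp_all
  also have "\<dots> = (\<Sum>r\<in>{1..<n}. (\<Sum>p\<in>{Suc r..<n}. g p r) + g n r)"
    by (intro sum.cong refl) auto
  finally show ?case
    using Suc by (cases "n = 0") (simp_all add: sum.distrib)
qed simp

lemma qfrac_conv_sum_below: "qfrac_conv (sum_below v) n = sum_below (qfrac_conv v) n"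
proof -
  have "qfrac_conv (sum_below v) n = (\<Sum>r\<in>{1..<n}. \<Sum>p\<in>{Suc r..<n}. c_qfrac (n - p) * v r)"
    unfolding qfrac_conv_def sum_below_def sum_distrib_left by (rule sum_triangle_swap)
  also have "\<dots> = (\<Sum>r\<in>{1..<n}. \<Sum>p\<in>{Suc r..<n}. c_qfrac (p - r) * v r)"
  proof (rule sum.cong[OF refl])
    fix r
    show "(\<Sum>p\<in>{Suc r..<n}. c_qfrac (n - p) * v r) = (\<Sum>p\<in>{Suc r..<n}. c_qfrac (p - r) * v r)"
      by (rule sum.reindex_bij_witness[where i="\<lambda>p. n + r - p" and j="\<lambda>p. n + r - p"]) auto
  qed
  also have "\<dots> = sum_below (qfrac_conv v) n"
    unfolding qfrac_conv_def sum_below_def by (rule sum_triangle_swap[symmetric])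
  finally show ?thesis .
qed

lemma qfrac_conv_tsum_upto: "qfrac_conv (tsum_upto v) n = tsum_upto (qfrac_conv v) n"
proof -
  have "tsum_upto v = (\<lambda>m. sum_below v m + tvar * v m)"
    by (simp add: fun_eq_iff tsum_upto_def)
  then show ?thesis
    by (simp add: qfrac_conv_add qfrac_conv_mult qfrac_conv_sum_below tsum_upto_def)
qed

lemma qfrac_conv_one: "qfrac_conv (\<lambda>m. 1) n = qfrac_sum n - c_qfrac n"
proof (cases n)
  case (Suc n')
  have "qfrac_conv (\<lambda>m. 1) n = (\<Sum>d\<in>{1..<n}. c_qfrac d)"
    unfolding qfrac_conv_def
    by (simp, rule sum.reindex_bij_witness[where i="\<lambda>p. n - p" and j="\<lambda>p. n - p"]) auto
  then show ?thesis
    using Suc by (simp add: qfrac_sum_def atLeastLessThanSuc_atLeastAtMost)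
qed (simp add: qfrac_conv_def qfrac_sum_def c_qfrac_def qfrac_0)

lemma sum_below_qfrac_sum:
  "sum_below (\<lambda>m. c_qfrac m * sum_below v m) n + sum_below (\<lambda>m. qfrac_sum m * v m) n
     = (qfrac_sum n - c_qfrac n) * sum_below v n"
proof (induction n)
  case (Suc n)
  then show ?case
    by (cases "n = 0") (simp_all add: sum_below_0 sum_below_Suc qfrac_sum_def algebra_simps)
qed (simp add: sum_below_0)

definition err_at :: "(nat \<Rightarrow> rat fps poly) \<Rightarrow> nat \<Rightarrow> rat fps poly" where
  "err_at U n = qfrac_conv U n - c_qfrac n * sum_below U n - qfrac_sum n * U n"

lemma tsum_upto_err_at:
  "tsum_upto (err_at U) n = qfrac_conv (tsum_upto U) n - qfrac_sum n * tsum_upto U n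
     + (1 - tvar) * c_qfrac n * tsum_upto U n + tvar * (tvar - 1) * c_qfrac n * U n"
proof -
  have "err_at U = (\<lambda>m. qfrac_conv U m - (c_qfrac m * sum_below U m + qfrac_sum m * U m))"
    by (simp add: fun_eq_iff err_at_def)
  then have "tsum_upto (err_at U) n = tsum_upto (qfrac_conv U) n
      - (sum_below (\<lambda>m. c_qfrac m * sum_below U m) n + sum_below (\<lambda>m. qfrac_sum m * U m) n)
      - tvar * (c_qfrac n * sum_below U n + qfrac_sum n * U n)"
    by (simp add: tsum_upto_diff tsum_upto_def sum_below_add algebra_simps)
  then show ?thesis
    by (simp only: sum_below_qfrac_sum qfrac_conv_tsum_upto) (simp add: tsum_upto_def algebra_simps)
qed

section \<open>The identity at a fixed top index\<close>

lemma sum_split_tsum_upto: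
  assumes "k \<ge> 1"
  shows "(\<Sum>j<k - 1. c_factor (k - j) n * tsum_upto (\<lambda>m. c_factor (Suc j) m * v m) n)
    = qfrac_conv (\<lambda>m. c_factor k m * v m) n - c_factor k n * qfrac_conv v n
      - c_qfrac n * sum_below (\<lambda>m. c_factor k m * v m) n
      + tvar * of_nat (k - 1) * (c_qfrac n * c_factor k n + c_one_minus_q * c_factor k n) * v n"
proof -
  have "(\<Sum>j<k - 1. c_factor (k - j) n * tsum_upto (\<lambda>m. c_factor (Suc j) m * v m) n)
      = (\<Sum>j<k - 1. \<Sum>p\<in>{1..<n}. c_factor (k - j) n * c_factor (Suc j) p * v p)
        + tvar * (\<Sum>j<k - 1. c_factor (k - j) n * c_factor (Suc j) n) * v n"
    by (simp add: tsum_upto_def sum_below_def distrib_left sum.distrib sum_distrib_left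
        sum_distrib_right algebra_simps)
  also have "(\<Sum>j<k - 1. \<Sum>p\<in>{1..<n}. c_factor (k - j) n * c_factor (Suc j) p * v p)
      = (\<Sum>p\<in>{1..<n}. (\<Sum>j<k - 1. c_factor (k - j) n * c_factor (Suc j) p) * v p)"
    by (subst sum.swap) (simp add: sum_distrib_right)
  also have "(\<Sum>p\<in>{1..<n}. (\<Sum>j<k - 1. c_factor (k - j) n * c_factor (Suc j) p) * v p)
      = (\<Sum>p\<in>{1..<n}. (c_qfrac (n - p) * c_factor k p - c_factor k n * c_qfrac (n - p)
          - c_qfrac n * c_factor k p) * v p)"
  proof (intro sum.cong refl)
    fix p assume "p \<in> {1..<n}"
    then show "(\<Sum>j<k - 1. c_factor (k - j) n * c_factor (Suc j) p) * v p
        = (c_qfrac (n - p) * c_factor k p - c_factor k n * c_qfrac (n - p)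
            - c_qfrac n * c_factor k p) * v p"
      using sum_split_c_factor[of p n k] assms by simp
  qed
  also have "\<dots> = qfrac_conv (\<lambda>m. c_factor k m * v m) n - c_factor k n * qfrac_conv v n
      - c_qfrac n * sum_below (\<lambda>m. c_factor k m * v m) n"
    by (simp add: qfrac_conv_def sum_below_def sum_distrib_left sum_subtractf sum.distrib algebra_simps)
  also note sum_split_c_factor_diag[OF assms, of n]
  finally show ?thesis
    by (simp add: algebra_simps)
qed

text \<open>With \<open>f\<^sub>k(m) = zq_factor k m\<close>, \<open>zt_tail ks n\<close> is the sum of
  \<open>f\<^sub>k\<^sub>1(m\<^sub>1) \<cdots> f\<^sub>k\<^sub>l(m\<^sub>l)\<close> over \<open>n \<ge> m\<^sub>1 \<ge> \<dots> \<ge> m\<^sub>l \<ge> 1\<close>, with a factor \<open>t\<close> for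
  every equality \<open>m\<^sub>1 = n\<close> or \<open>m\<^sub>a = m\<^sub>a\<^sub>+\<^sub>1\<close>; \<open>zt_top ks n\<close> is the part of \<open>\<zeta>\<^sub>q\<^sup>t(ks)\<close> with
  \<open>m\<^sub>1 = n\<close>. This is the form of \<open>\<zeta>\<^sub>q\<^sup>t\<close> the argument works with; \<open>sum_boxes_eq\<close>
  identifies it with the box expansion of the definition.\<close>
fun zt_tail :: "nat list \<Rightarrow> nat \<Rightarrow> rat fps poly" where
  "zt_tail [] = (\<lambda>n. 1)"
| "zt_tail (k # ks) = tsum_upto (\<lambda>n. c_factor k n * zt_tail ks n)"

definition zt_top :: "nat list \<Rightarrow> nat \<Rightarrow> rat fps poly" where
  "zt_top ks n = c_factor (hd ks) n * zt_tail (tl ks) n"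

lemma zt_top_Cons: "zt_top (k # ks) = (\<lambda>n. c_factor k n * zt_tail ks n)"
  by (simp add: fun_eq_iff zt_top_def)

lemma zt_tail_eq_tsum_upto: "ks \<noteq> [] \<Longrightarrow> zt_tail ks = tsum_upto (zt_top ks)"
  by (cases ks) (simp_all add: zt_top_Cons)

lemma zt_top_Cons_Cons: "ks \<noteq> [] \<Longrightarrow> zt_top (k # ks) n = c_factor k n * tsum_upto (zt_top ks) n"
  by (simp add: zt_top_Cons zt_tail_eq_tsum_upto)

definition split_entry :: "nat list \<Rightarrow> nat \<Rightarrow> nat \<Rightarrow> nat list" where
  "split_entry ks i j = take i ks @ [ks ! i - j, Suc j] @ drop (Suc i) ks"

definition incr_entry :: "nat list \<Rightarrow> nat \<Rightarrow> nat list" where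
  "incr_entry ks i = ks[i := Suc (ks ! i)]"

definition join_entries :: "nat list \<Rightarrow> nat \<Rightarrow> nat \<Rightarrow> nat list" where
  "join_entries ks e i = take i ks @ [ks ! i + ks ! Suc i + e] @ drop (Suc (Suc i)) ks"

lemma split_entry_Cons_0: "split_entry (k # ks) 0 j = (k - j) # Suc j # ks"
  by (simp add: split_entry_def)

lemma split_entry_Cons_Suc: "split_entry (k # ks) (Suc i) j = k # split_entry ks i j"
  by (simp add: split_entry_def)

lemma incr_entry_Cons_0: "incr_entry (k # ks) 0 = Suc k # ks"
  by (simp add: incr_entry_def)

lemma incr_entry_Cons_Suc: "incr_entry (k # ks) (Suc i) = k # incr_entry ks i"
  by (simp add: incr_entry_def)

lemma join_entries_Cons_0: "join_entries (k # k' # ks) e 0 = (k + k' + e) # ks"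
  by (simp add: join_entries_def)

lemma join_entries_Cons_Suc: "join_entries (k # ks) e (Suc i) = k # join_entries ks e i"
  by (simp add: join_entries_def)

text \<open>The parts with \<open>m\<^sub>1 = n\<close> of the two sides of the theorem; the coefficient
  \<open>1 + (k\<^sub>i - 2 + \<delta>\<^sub>i\<^sub>,\<^sub>l) t\<close> is split as \<open>(k\<^sub>i - 1) t + (1 - t + \<delta>\<^sub>i\<^sub>,\<^sub>l t)\<close>, and the
  \<open>(1 - q) (k\<^sub>i - 1) t\<close> term is distributed over the summands.\<close>
definition lhs_at :: "nat list \<Rightarrow> nat \<Rightarrow> rat fps poly" where
  "lhs_at ks n = (\<Sum>i<length ks. \<Sum>j<ks ! i - 1. zt_top (split_entry ks i j) n)"

definition rhs_incr_at :: "nat list \<Rightarrow> nat \<Rightarrow> nat \<Rightarrow> rat fps poly" where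
  "rhs_incr_at ks i n =
     tvar * of_nat (ks ! i - 1) * (zt_top (incr_entry ks i) n + c_one_minus_q * zt_top ks n)
     + (1 - tvar + (if i = length ks - 1 then tvar else 0)) * zt_top (incr_entry ks i) n"

definition rhs_join_at :: "nat list \<Rightarrow> nat \<Rightarrow> nat \<Rightarrow> rat fps poly" where
  "rhs_join_at ks i n = zt_top (join_entries ks 1 i) n + c_one_minus_q * zt_top (join_entries ks 0 i) n"

definition rhs_at :: "nat list \<Rightarrow> nat \<Rightarrow> rat fps poly" where
  "rhs_at ks n = (\<Sum>i<length ks. rhs_incr_at ks i n)
     + tvar * (tvar - 1) * (\<Sum>i<length ks - 1. rhs_join_at ks i n)"

lemma lhs_at_Cons:
  "lhs_at (k # ks) n = (\<Sum>j<k - 1. c_factor (k - j) n * tsum_upto (\<lambda>m. c_factor (Suc j) m * zt_tail ks m) n)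
     + c_factor k n * tsum_upto (lhs_at ks) n"
proof -
  have "lhs_at ks = (\<lambda>m. \<Sum>i<length ks. \<Sum>j<ks ! i - 1. zt_top (split_entry ks i j) m)"
    by (simp add: fun_eq_iff lhs_at_def)
  then have "(\<Sum>i<length ks. \<Sum>j<ks ! i - 1. zt_top (split_entry (k # ks) (Suc i) j) n)
      = c_factor k n * tsum_upto (lhs_at ks) n"
    by (simp add: split_entry_Cons_Suc zt_top_Cons_Cons split_entry_def tsum_upto_sum sum_distrib_left)
  then show ?thesis
    unfolding lhs_at_def length_Cons sum.lessThan_Suc_shift
    by (simp add: split_entry_Cons_0 zt_top_Cons)
qed

lemma rhs_incr_at_Cons_Suc:
  assumes "i < length ks"
  shows "rhs_incr_at (k # ks) (Suc i) n = c_factor k n * tsum_upto (rhs_incr_at ks i) n"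
proof -
  have ne: "ks \<noteq> []" "incr_entry ks i \<noteq> []"
    using assms by (auto simp: incr_entry_def)
  define c where "c = 1 - tvar + (if i = length ks - 1 then tvar else 0)"
  have c: "1 - tvar + (if Suc i = length (k # ks) - 1 then tvar else 0) = c"
    using ne by (auto simp: c_def)
  have "rhs_incr_at ks i = (\<lambda>m. tvar * of_nat (ks ! i - 1)
      * (zt_top (incr_entry ks i) m + c_one_minus_q * zt_top ks m) + c * zt_top (incr_entry ks i) m)"
    by (simp add: fun_eq_iff rhs_incr_at_def c_def)
  then have "tsum_upto (rhs_incr_at ks i) n = tvar * of_nat (ks ! i - 1)
      * (tsum_upto (zt_top (incr_entry ks i)) n + c_one_minus_q * tsum_upto (zt_top ks) n)
      + c * tsum_upto (zt_top (incr_entry ks i)) n"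
    by (simp add: tsum_upto_add tsum_upto_mult)
  then show ?thesis
    unfolding rhs_incr_at_def c incr_entry_Cons_Suc using ne by (simp add: zt_top_Cons_Cons algebra_simps)
qed

lemma rhs_join_at_Cons_Suc:
  "rhs_join_at (k # ks) (Suc i) n = c_factor k n * tsum_upto (rhs_join_at ks i) n"
proof -
  have "rhs_join_at ks i
      = (\<lambda>m. zt_top (join_entries ks 1 i) m + c_one_minus_q * zt_top (join_entries ks 0 i) m)"
    by (simp add: fun_eq_iff rhs_join_at_def)
  then show ?thesis
    by (simp add: rhs_join_at_def join_entries_Cons_Suc zt_top_Cons_Cons join_entries_def
        tsum_upto_add tsum_upto_mult algebra_simps)
qed

lemma rhs_at_Cons:
  assumes "ks \<noteq> []"
  shows "rhs_at (k # ks) n = rhs_incr_at (k # ks) 0 n + tvar * (tvar - 1) * rhs_join_at (k # ks) 0 n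
     + c_factor k n * tsum_upto (rhs_at ks) n"
proof -
  have incr: "(\<Sum>i<length (k # ks). rhs_incr_at (k # ks) i n)
      = rhs_incr_at (k # ks) 0 n + c_factor k n * tsum_upto (\<lambda>m. \<Sum>i<length ks. rhs_incr_at ks i m) n"
    unfolding length_Cons sum.lessThan_Suc_shift tsum_upto_sum sum_distrib_left
    by (simp add: rhs_incr_at_Cons_Suc)
  have "length (k # ks) - 1 = Suc (length ks - 1)"
    using assms by simp
  then have join: "(\<Sum>i<length (k # ks) - 1. rhs_join_at (k # ks) i n)
      = rhs_join_at (k # ks) 0 n + c_factor k n * tsum_upto (\<lambda>m. \<Sum>i<length ks - 1. rhs_join_at ks i m) n"
    by (simp only: sum.lessThan_Suc_shift rhs_join_at_Cons_Suc tsum_upto_sum sum_distrib_left)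
  have "rhs_at ks = (\<lambda>m. (\<Sum>i<length ks. rhs_incr_at ks i m)
      + tvar * (tvar - 1) * (\<Sum>i<length ks - 1. rhs_join_at ks i m))"
    by (simp add: fun_eq_iff rhs_at_def)
  then have tsum_rhs: "tsum_upto (rhs_at ks) n = tsum_upto (\<lambda>m. \<Sum>i<length ks. rhs_incr_at ks i m) n
      + tvar * (tvar - 1) * tsum_upto (\<lambda>m. \<Sum>i<length ks - 1. rhs_join_at ks i m) n"
    by (simp only: tsum_upto_add tsum_upto_mult)
  show ?thesis
    unfolding rhs_at_def[of "k # ks" n] incr join tsum_rhs by (simp add: algebra_simps)
qed

lemma lhs_at_singleton:
  assumes "k \<ge> 1"
  shows "lhs_at [k] n = rhs_at [k] n + err_at (zt_top [k]) n"
proof -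
  have "lhs_at [k] n = (\<Sum>j<k - 1. c_factor (k - j) n * tsum_upto (\<lambda>m. c_factor (Suc j) m * 1) n)"
    using lhs_at_Cons[of k "[]" n] by (simp add: lhs_at_def tsum_upto_def sum_below_def)
  also have "\<dots> = qfrac_conv (\<lambda>m. c_factor k m * 1) n - c_factor k n * qfrac_conv (\<lambda>m. 1) n
      - c_qfrac n * sum_below (\<lambda>m. c_factor k m * 1) n
      + tvar * of_nat (k - 1) * (c_qfrac n * c_factor k n + c_one_minus_q * c_factor k n) * 1"
    by (rule sum_split_tsum_upto[OF assms])
  finally show ?thesis
    by (simp add: rhs_at_def rhs_incr_at_def incr_entry_def err_at_def zt_top_Cons qfrac_conv_one
        c_factor_Suc[OF assms] algebra_simps)
qed

lemma lhs_at_Cons_eq: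
  assumes "k \<ge> 1" "k' \<ge> 1"
    and IH: "\<And>m. lhs_at (k' # ks) m = rhs_at (k' # ks) m + err_at (zt_top (k' # ks)) m"
  shows "lhs_at (k # k' # ks) n = rhs_at (k # k' # ks) n + err_at (zt_top (k # k' # ks)) n"
proof -
  let ?r = "k' # ks"
  have V: "tsum_upto (zt_top ?r) = zt_tail ?r"
    by (rule zt_tail_eq_tsum_upto[symmetric]) simp
  have "lhs_at ?r = (\<lambda>m. rhs_at ?r m + err_at (zt_top ?r) m)"
    using IH by (simp add: fun_eq_iff)
  then have lhs_r: "tsum_upto (lhs_at ?r) n = tsum_upto (rhs_at ?r) n
      + (qfrac_conv (zt_tail ?r) n - qfrac_sum n * zt_tail ?r n + (1 - tvar) * c_qfrac n * zt_tail ?r n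
         + tvar * (tvar - 1) * c_qfrac n * zt_top ?r n)"
    by (simp only: tsum_upto_add tsum_upto_err_at V)
  have L: "lhs_at (k # ?r) n
      = qfrac_conv (\<lambda>m. c_factor k m * zt_tail ?r m) n - c_factor k n * qfrac_conv (zt_tail ?r) n
        - c_qfrac n * sum_below (\<lambda>m. c_factor k m * zt_tail ?r m) n
        + tvar * of_nat (k - 1) * (c_qfrac n * c_factor k n + c_one_minus_q * c_factor k n) * zt_tail ?r n
        + c_factor k n * tsum_upto (lhs_at ?r) n"
    by (simp only: lhs_at_Cons sum_split_tsum_upto[OF assms(1)])
  have J: "rhs_join_at (k # ?r) 0 n = c_qfrac n * c_factor k n * c_factor k' n * zt_tail ks n"
    unfolding c_qfrac_mult_c_factor_mult[OF assms(1,2)]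
    by (simp add: rhs_join_at_def join_entries_Cons_0 zt_top_Cons algebra_simps)
  have R: "rhs_at (k # ?r) n
      = tvar * of_nat (k - 1) * (c_qfrac n * c_factor k n * zt_tail ?r n
          + c_one_minus_q * (c_factor k n * zt_tail ?r n))
        + (1 - tvar) * (c_qfrac n * c_factor k n * zt_tail ?r n)
        + tvar * (tvar - 1) * (c_qfrac n * c_factor k n * c_factor k' n * zt_tail ks n)
        + c_factor k n * tsum_upto (rhs_at ?r) n"
    by (simp add: rhs_at_Cons J rhs_incr_at_def incr_entry_Cons_0 zt_top_Cons c_factor_Suc[OF assms(1)]
        algebra_simps)
  show ?thesis
    unfolding L lhs_r R by (simp add: err_at_def zt_top_Cons algebra_simps)
qed

lemma lhs_at_eq:
  "ks \<noteq> [] \<Longrightarrow> \<forall>k\<in>set ks. k \<ge> 1 \<Longrightarrow> lhs_at ks n = rhs_at ks n + err_at (zt_top ks) n"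
proof (induction ks arbitrary: n rule: induct_list012)
  case (3 k k' ks)
  then show ?case using lhs_at_Cons_eq by simp
qed (simp_all add: lhs_at_singleton)

section \<open>Summing the error terms\<close>

lemma sum_err_at:
  "(\<Sum>n\<in>{1..M}. err_at U n) = - (\<Sum>p\<in>{1..M}. U p * (qfrac_sum M - qfrac_sum (M - p)))"
proof (induction M)
  case (Suc M)
  have shift: "qfrac_sum (Suc M) - qfrac_sum (Suc M - p) = qfrac_sum M - qfrac_sum (M - p)
      + c_qfrac (Suc M) - c_qfrac (Suc M - p)" if "p \<le> M" for p
    using that by (simp add: qfrac_sum_Suc Suc_diff_le)
  have "(\<Sum>n\<in>{1..Suc M}. err_at U n)
      = - (\<Sum>p\<in>{1..M}. U p * (qfrac_sum M - qfrac_sum (M - p)))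
        + ((\<Sum>p\<in>{1..M}. c_qfrac (Suc M - p) * U p) - c_qfrac (Suc M) * (\<Sum>p\<in>{1..M}. U p)
        - qfrac_sum (Suc M) * U (Suc M))"
    using Suc by (simp add: err_at_def qfrac_conv_def sum_below_def atLeastLessThanSuc_atLeastAtMost)
  also have "\<dots> = - (\<Sum>p\<in>{1..M}. U p * (qfrac_sum (Suc M) - qfrac_sum (Suc M - p)))
      - qfrac_sum (Suc M) * U (Suc M)"
    by (simp add: shift sum_distrib_left sum.distrib sum_subtractf algebra_simps)
  also have "\<dots> = - (\<Sum>p\<in>{1..Suc M}. U p * (qfrac_sum (Suc M) - qfrac_sum (Suc M - p)))"
    by (simp add: qfrac_sum_0 algebra_simps)
  finally show ?case .
qed simp

lemma qfrac_sum_diff_dvd: "p \<le> M \<Longrightarrow> [:fps_X ^ Suc p:] dvd (qfrac_sum M - qfrac_sum p)"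
proof (induction M)
  case (Suc M)
  show ?case
  proof (cases "p = Suc M")
    case False
    then have "p \<le> M" using Suc by simp
    moreover have "[:fps_X ^ Suc p:] dvd c_qfrac (Suc M)"
      unfolding c_qfrac_def qfrac_def using \<open>p \<le> M\<close> by (intro const_X_power_dvd) simp
    ultimately show ?thesis
      using Suc.IH by (simp add: qfrac_sum_Suc diff_add_eq[symmetric])
  qed simp
qed simp

lemma zt_top_dvd:
  assumes "ks \<noteq> []" "hd ks \<ge> 2"
  shows "[:fps_X ^ p:] dvd zt_top ks p"
proof -
  have "1 \<le> hd ks - 1"
    using assms by simp
  then have "p \<le> (hd ks - 1) * p"
    by simp
  then have "[:fps_X ^ p:] dvd c_factor (hd ks) p"
    unfolding c_factor_def zq_factor_def by (rule const_X_power_dvd)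
  then show ?thesis
    by (simp add: zt_top_def)
qed

text \<open>The error is of order \<open>q\<^sup>M\<^sup>+\<^sup>1\<close> since \<open>zt_top ks p\<close> is of order \<open>q\<^sup>p\<close>
  and \<open>qfrac_sum M - qfrac_sum (M - p)\<close> of order \<open>q\<^sup>M\<^sup>-\<^sup>p\<^sup>+\<^sup>1\<close>.\<close>
lemma sum_err_at_dvd:
  assumes "ks \<noteq> []" "hd ks \<ge> 2"
  shows "[:fps_X ^ Suc M:] dvd (\<Sum>n\<in>{1..M}. err_at (zt_top ks) n)"
  unfolding sum_err_at dvd_minus_iff
proof (rule dvd_sum)
  fix p assume p: "p \<in> {1..M}"
  have "[:fps_X ^ Suc M:] = [:fps_X ^ p:] * [:fps_X ^ Suc (M - p):]"
    using p by (simp only: mult_to_poly power_add[symmetric]) simp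
  also have "\<dots> dvd zt_top ks p * (qfrac_sum M - qfrac_sum (M - p))"
    by (rule mult_dvd_mono[OF zt_top_dvd[OF assms] qfrac_sum_diff_dvd]) simp
  finally show "[:fps_X ^ Suc M:] dvd zt_top ks p * (qfrac_sum M - qfrac_sum (M - p))" .
qed

section \<open>Truncating \<open>\<zeta>\<^sub>q\<close>\<close>

definition zq_dom_below :: "nat \<Rightarrow> nat \<Rightarrow> nat list set" where
  "zq_dom_below l M = {ms. length ms = l \<and> sorted_wrt (>) ms \<and> (\<forall>m\<in>set ms. 1 \<le> m \<and> m < M)}"

fun zq_partial :: "nat list \<Rightarrow> nat \<Rightarrow> rat fps" where
  "zq_partial [] M = 1"
| "zq_partial (k # ks) M = (\<Sum>n\<in>{1..<M}. zq_factor k n * zq_partial ks n)"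

lemma zq_term_Cons: "zq_term (k # ks) (n # ms) = zq_factor k n * zq_term ks ms"
  unfolding zq_term_def zq_factor_def length_Cons prod.lessThan_Suc_shift by simp

lemma finite_zq_dom_below: "finite (zq_dom_below l M)"
proof (rule finite_subset)
  show "zq_dom_below l M \<subseteq> {ms. set ms \<subseteq> {..<M} \<and> length ms = l}"
    by (auto simp: zq_dom_below_def)
qed (rule finite_lists_length_eq, simp)

lemma zq_dom_below_subset: "zq_dom_below l M \<subseteq> zq_dom l"
  by (auto simp: zq_dom_below_def zq_dom_def)

lemma zq_dom_below_mono: "M \<le> M' \<Longrightarrow> zq_dom_below l M \<subseteq> zq_dom_below l M'"
  by (auto simp: zq_dom_below_def)

lemma zq_dom_below_Suc: "zq_dom_below (Suc l) M = (\<Union>n\<in>{1..<M}. (\<lambda>ms. n # ms) ` zq_dom_below l n)"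
proof (intro equalityI subsetI)
  fix ms assume ms: "ms \<in> zq_dom_below (Suc l) M"
  then obtain n ms' where ms_eq: "ms = n # ms'"
    by (cases ms) (auto simp: zq_dom_below_def)
  with ms have "n \<in> {1..<M}" "ms' \<in> zq_dom_below l n"
    by (auto simp: zq_dom_below_def)
  then show "ms \<in> (\<Union>n\<in>{1..<M}. (\<lambda>ms. n # ms) ` zq_dom_below l n)"
    using ms_eq by blast
next
  fix ms assume "ms \<in> (\<Union>n\<in>{1..<M}. (\<lambda>ms. n # ms) ` zq_dom_below l n)"
  then obtain n ms' where "n \<in> {1..<M}" "ms' \<in> zq_dom_below l n" "ms = n # ms'"
    by blast
  then show "ms \<in> zq_dom_below (Suc l) M"
    by (auto simp: zq_dom_below_def)
qed

lemma sum_zq_dom_below: "(\<Sum>ms\<in>zq_dom_below (length ks) M. zq_term ks ms) = zq_partial ks M"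
proof (induction ks arbitrary: M)
  case Nil
  have "zq_dom_below 0 M = {[]}"
    by (auto simp: zq_dom_below_def)
  then show ?case by (simp add: zq_term_def)
next
  case (Cons k ks)
  have "(\<Sum>ms\<in>zq_dom_below (length (k # ks)) M. zq_term (k # ks) ms)
      = (\<Sum>n\<in>{1..<M}. \<Sum>ms\<in>(\<lambda>ms. n # ms) ` zq_dom_below (length ks) n. zq_term (k # ks) ms)"
    unfolding length_Cons zq_dom_below_Suc
    by (rule sum.UNION_disjoint) (auto simp: finite_zq_dom_below)
  also have "\<dots> = (\<Sum>n\<in>{1..<M}. \<Sum>ms\<in>zq_dom_below (length ks) n. zq_factor k n * zq_term ks ms)"
    by (rule sum.cong[OF refl], subst sum.reindex) (auto simp: inj_on_def zq_term_Cons)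
  finally show ?case
    by (simp add: sum_distrib_left[symmetric] Cons.IH)
qed

text \<open>Since \<open>k\<^sub>1 \<ge> 2\<close>, a summand with \<open>m\<^sub>1 = n\<close> is of order \<open>q\<^sup>n\<close>; so the coefficient of
  \<open>q\<^sup>i\<close> in \<open>\<zeta>\<^sub>q\<close> only sees the finitely many summands with \<open>m\<^sub>1 \<le> i\<close>.\<close>
lemma sum_zq_term_nth:
  assumes "ks \<noteq> []" "hd ks \<ge> 2"
    and B: "finite B" "zq_dom_below (length ks) (Suc i) \<subseteq> B" "B \<subseteq> zq_dom (length ks)"
  shows "sum (zq_term ks) B $ i = zq_partial ks (Suc i) $ i"
proof -
  let ?A = "zq_dom_below (length ks) (Suc i)"
  have "zq_term ks ms $ i = 0" if ms: "ms \<in> B - ?A" for ms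
  proof -
    obtain k ks' where ks: "ks = k # ks'"
      using assms by (cases ks) auto
    obtain n ms' where ms_eq: "ms = n # ms'"
      using ms B(3) assms by (cases ms) (auto simp: zq_dom_def)
    have "\<not> (\<forall>m\<in>set ms. m < Suc i)"
      using ms B(3) by (auto simp: zq_dom_def zq_dom_below_def)
    then obtain x where x: "x \<in> set ms" "Suc i \<le> x"
      by (auto simp: not_less)
    moreover have "ms \<in> zq_dom (length ks)"
      using ms B(3) by blast
    then have "x \<le> n"
      using x(1) by (auto simp: ms_eq zq_dom_def)
    ultimately have "n > i"
      by simp
    moreover have "k - 1 \<ge> 1"
      using assms ks by simp
    ultimately have "(k - 1) * n > i"
      by (metis less_le_trans mult_1 mult_le_mono1)
    then show ?thesis
      by (simp add: ks ms_eq zq_term_Cons zq_factor_def mult.assoc fps_X_power_mult_nth)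
  qed
  then have "sum (zq_term ks) (B - ?A) $ i = 0"
    by (simp add: fps_sum_nth)
  moreover have "sum (zq_term ks) B = sum (zq_term ks) ?A + sum (zq_term ks) (B - ?A)"
    using B by (metis add.commute sum.subset_diff)
  ultimately show ?thesis
    by (simp add: sum_zq_dom_below)
qed

lemma has_sum_zq_term:
  assumes "ks \<noteq> []" "hd ks \<ge> 2"
  shows "(zq_term ks has_sum Abs_fps (\<lambda>i. zq_partial ks (Suc i) $ i)) (zq_dom (length ks))"
  unfolding has_sum_def
proof (rule tendsto_fpsI)
  fix i
  show "\<forall>\<^sub>F B in finite_subsets_at_top (zq_dom (length ks)).
      sum (zq_term ks) B $ i = Abs_fps (\<lambda>i. zq_partial ks (Suc i) $ i) $ i"
    unfolding eventually_finite_subsets_at_top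
    using sum_zq_term_nth[OF assms] finite_zq_dom_below zq_dom_below_subset
    by (intro exI[of _ "zq_dom_below (length ks) (Suc i)"]) auto
qed

lemma zeta_q_nth:
  assumes "ks \<noteq> []" "hd ks \<ge> 2" "i \<le> M"
  shows "zeta_q ks $ i = zq_partial ks (Suc M) $ i"
proof -
  have "zeta_q ks $ i = zq_partial ks (Suc i) $ i"
    using infsumI[OF has_sum_zq_term[OF assms(1,2)]] by (simp add: zeta_q_def)
  also have "\<dots> = zq_partial ks (Suc M) $ i"
  proof -
    have "zq_dom_below (length ks) (Suc i) \<subseteq> zq_dom_below (length ks) (Suc M)"
      using assms(3) by (intro zq_dom_below_mono) simp
    then have "sum (zq_term ks) (zq_dom_below (length ks) (Suc M)) $ i = zq_partial ks (Suc i) $ i"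
      by (intro sum_zq_term_nth[OF assms(1,2)] finite_zq_dom_below zq_dom_below_subset)
    then show ?thesis
      by (simp add: sum_zq_dom_below)
  qed
  finally show ?thesis .
qed

lemma zeta_q_minus_zq_partial_dvd:
  assumes "ks \<noteq> []" "hd ks \<ge> 2"
  shows "fps_X ^ Suc M dvd (zeta_q ks - zq_partial ks (Suc M))"
  by (rule fps_X_power_dvd_if_nth_eq_0) (simp add: zeta_q_nth[OF assms, of _ M])

section \<open>The box expansion\<close>

lemma length_merge_le: "length (merge c ks os) \<le> Suc (length ks)"
  by (induction c ks os rule: merge.induct) auto

lemma sum_list_merge_le: "sum_list (merge c ks os) \<le> c + sum_list ks"
  by (induction c ks os rule: merge.induct) auto

lemma hd_merge_ge: "\<forall>k\<in>set ks. k \<ge> 1 \<Longrightarrow> merge c ks os \<noteq> [] \<and> hd (merge c ks os) \<ge> c"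
  by (induction c ks os rule: merge.induct) force+

lemma sum_box_lists_Suc:
  "(\<Sum>os\<in>{os. length os = Suc l}. g os)
     = (\<Sum>os\<in>{os. length os = l}. g (Comma # os) + g (Plus # os) + g (MinusPlus # os))"
proof -
  have box_UNIV: "(UNIV :: box set) = {Comma, Plus, MinusPlus}"
    using box.exhaust by auto
  have lists: "{os. length os = Suc l} = (\<lambda>(b, os). b # os) ` (UNIV \<times> {os. length os = l})"
    by (auto simp: length_Suc_conv image_iff)
  have "(\<Sum>os\<in>{os. length os = Suc l}. g os) = (\<Sum>(b, os)\<in>UNIV \<times> {os. length os = l}. g (b # os))"
    unfolding lists by (subst sum.reindex) (auto simp: inj_on_def split_def)
  also have "\<dots> = (\<Sum>b\<in>UNIV. \<Sum>os\<in>{os. length os = l}. g (b # os))"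
    by (rule sum.cartesian_product[symmetric])
  finally show ?thesis
    by (simp add: box_UNIV sum.distrib add.assoc)
qed

definition box_term :: "nat \<Rightarrow> nat list \<Rightarrow> nat \<Rightarrow> box list \<Rightarrow> rat fps poly" where
  "box_term c ks M os =
     [:(1 - fps_X) ^ (c + sum_list ks - sum_list (merge c ks os)) * zq_partial (merge c ks os) M:]
       * tvar ^ (Suc (length ks) - length (merge c ks os))"

lemma box_term_Comma:
  "box_term c (k # ks) M (Comma # os) = (\<Sum>n\<in>{1..<M}. c_factor c n * box_term k ks n os)"
  by (simp add: box_term_def c_factor_def sum_to_poly[symmetric] sum_distrib_left sum_distrib_right
      algebra_simps)

lemma box_term_Plus: "box_term c (k # ks) M (Plus # os) = tvar * box_term (c + k) ks M os"
proof -
  have "Suc (Suc (length ks)) - length (merge (c + k) ks os)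
      = Suc (Suc (length ks) - length (merge (c + k) ks os))"
    using length_merge_le[of "c + k" ks os] by simp
  then show ?thesis
    by (simp add: box_term_def add.assoc algebra_simps)
qed

lemma box_term_MinusPlus:
  assumes "c \<ge> 1"
  shows "box_term c (k # ks) M (MinusPlus # os) = tvar * c_one_minus_q * box_term (c - 1 + k) ks M os"
proof -
  define p where "p = merge (c - 1 + k) ks os"
  define e where "e = c - 1 + k + sum_list ks - sum_list p"
  define d where "d = Suc (length ks) - length p"
  have "c + sum_list (k # ks) - sum_list p = Suc e"
    using sum_list_merge_le[of "c - 1 + k" ks os] assms by (simp add: p_def e_def)
  moreover have "Suc (length (k # ks)) - length p = Suc d"
    using length_merge_le[of "c - 1 + k" ks os] by (simp add: p_def d_def)
  ultimately have "box_term c (k # ks) M (MinusPlus # os)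
      = [:(1 - fps_X) ^ Suc e * zq_partial p M:] * tvar ^ Suc d"
    by (simp add: box_term_def p_def)
  also have "\<dots> = tvar * c_one_minus_q * ([:(1 - fps_X) ^ e * zq_partial p M:] * tvar ^ d)"
  proof -
    have "[:(1 - fps_X) ^ Suc e * zq_partial p M:] = c_one_minus_q * [:(1 - fps_X) ^ e * zq_partial p M:]"
      by (simp only: c_one_minus_q_def one_minus_q_def mult_to_poly power_Suc mult.assoc)
    then show ?thesis
      by (simp add: ac_simps)
  qed
  finally show ?thesis
    by (simp add: box_term_def p_def e_def d_def)
qed

lemma c_factor_mult_zt_tail_Cons:
  assumes "c \<ge> 1" "k \<ge> 1"
  shows "c_factor c n * zt_tail (k # ks) n = c_factor c n * (\<Sum>p\<in>{1..<n}. c_factor k p * zt_tail ks p)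
    + tvar * c_factor (c + k) n * zt_tail ks n
    + tvar * c_one_minus_q * c_factor (c - 1 + k) n * zt_tail ks n"
proof -
  have "c + k - 1 = c - 1 + k"
    using assms by simp
  then have prod: "c_factor c n * c_factor k n
      = c_factor (c + k) n + c_one_minus_q * c_factor (c - 1 + k) n"
    using c_factor_mult[OF assms, of n] by simp
  have "c_factor c n * zt_tail (k # ks) n = c_factor c n * (\<Sum>p\<in>{1..<n}. c_factor k p * zt_tail ks p)
      + tvar * (c_factor c n * c_factor k n) * zt_tail ks n"
    by (simp add: tsum_upto_def sum_below_def algebra_simps)
  then show ?thesis
    unfolding prod by (simp add: algebra_simps)
qed

text \<open>Expanding the boxes from the left recovers the nested sums \<open>zt_tail\<close>: a comma opens a
  new strictly smaller summation index, while ``\<open>+\<close>'' and ``\<open>-1+\<close>'' together produce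
  the product of two factors at the same index, by \<open>c_factor_mult\<close>.\<close>
lemma sum_boxes_eq:
  "c \<ge> 1 \<Longrightarrow> \<forall>k\<in>set ks. k \<ge> 1 \<Longrightarrow>
   (\<Sum>os\<in>{os. length os = length ks}. box_term c ks M os) = (\<Sum>n\<in>{1..<M}. c_factor c n * zt_tail ks n)"
proof (induction ks arbitrary: c M)
  case Nil
  have "{os :: box list. length os = 0} = {[]}"
    by auto
  then show ?case
    by (simp add: box_term_def c_factor_def sum_to_poly)
next
  case (Cons k ks)
  have k: "k \<ge> 1" and ks: "\<forall>k\<in>set ks. k \<ge> 1"
    using Cons.prems by auto
  have c: "c \<ge> 1" by fact
  have "(\<Sum>n\<in>{1..<M}. c_factor c n * zt_tail (k # ks) n)
      = (\<Sum>n\<in>{1..<M}. c_factor c n * (\<Sum>p\<in>{1..<n}. c_factor k p * zt_tail ks p))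
        + tvar * (\<Sum>n\<in>{1..<M}. c_factor (c + k) n * zt_tail ks n)
        + tvar * c_one_minus_q * (\<Sum>n\<in>{1..<M}. c_factor (c - 1 + k) n * zt_tail ks n)"
    using c_factor_mult_zt_tail_Cons[OF c k] by (simp add: sum.distrib sum_distrib_left mult.assoc)
  also have "(\<Sum>n\<in>{1..<M}. c_factor c n * (\<Sum>p\<in>{1..<n}. c_factor k p * zt_tail ks p))
      = (\<Sum>os\<in>{os. length os = length ks}. box_term c (k # ks) M (Comma # os))"
    unfolding box_term_Comma by (subst sum.swap) (simp add: sum_distrib_left[symmetric] Cons.IH[OF k ks])
  also have "tvar * (\<Sum>n\<in>{1..<M}. c_factor (c + k) n * zt_tail ks n)
      = (\<Sum>os\<in>{os. length os = length ks}. box_term c (k # ks) M (Plus # os))"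
    unfolding box_term_Plus using c by (simp add: sum_distrib_left[symmetric] Cons.IH[OF _ ks])
  also have "tvar * c_one_minus_q * (\<Sum>n\<in>{1..<M}. c_factor (c - 1 + k) n * zt_tail ks n)
      = (\<Sum>os\<in>{os. length os = length ks}. box_term c (k # ks) M (MinusPlus # os))"
    unfolding box_term_MinusPlus[OF c] using c k
    by (simp add: sum_distrib_left[symmetric] Cons.IH[OF _ ks])
  finally show ?case
    by (simp add: sum_box_lists_Suc sum.distrib)
qed

definition zt_trunc :: "nat \<Rightarrow> nat list \<Rightarrow> rat fps poly" where
  "zt_trunc M ks = (\<Sum>n\<in>{1..M}. zt_top ks n)"

lemma zeta_qt_minus_zt_trunc_dvd:
  assumes "ks \<noteq> []" "hd ks \<ge> 2" "\<forall>k\<in>set ks. k \<ge> 1"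
  shows "[:fps_X ^ Suc M:] dvd (zeta_qt ks - zt_trunc M ks)"
proof -
  obtain c ks' where ks: "ks = c # ks'"
    using assms by (cases ks) auto
  have c: "c \<ge> 2" and ks': "\<forall>k\<in>set ks'. k \<ge> 1"
    using assms ks by auto
  let ?S = "{os :: box list. length os = length ks'}"
  let ?e = "\<lambda>os. c + sum_list ks' - sum_list (merge c ks' os)"
  let ?d = "\<lambda>os. Suc (length ks') - length (merge c ks' os)"
  have zeta: "zeta_qt ks = (\<Sum>os\<in>?S. [:(1 - fps_X) ^ ?e os * zeta_q (merge c ks' os):] * tvar ^ ?d os)"
    unfolding zeta_qt_def ks by (simp add: Let_def)
  have trunc: "zt_trunc M ks
      = (\<Sum>os\<in>?S. [:(1 - fps_X) ^ ?e os * zq_partial (merge c ks' os) (Suc M):] * tvar ^ ?d os)"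
    using sum_boxes_eq[of c ks' "Suc M"] c ks'
    by (simp add: zt_trunc_def ks zt_top_Cons box_term_def atLeastLessThanSuc_atLeastAtMost)
  have "zeta_qt ks - zt_trunc M ks = (\<Sum>os\<in>?S.
      [:(1 - fps_X) ^ ?e os * (zeta_q (merge c ks' os) - zq_partial (merge c ks' os) (Suc M)):]
        * tvar ^ ?d os)"
    unfolding zeta trunc sum_subtractf[symmetric]
    by (simp only: left_diff_distrib[symmetric] diff_to_poly right_diff_distrib)
  also have "[:fps_X ^ Suc M:] dvd \<dots>"
  proof (intro dvd_sum dvd_mult2)
    fix os
    have "merge c ks' os \<noteq> []" "2 \<le> hd (merge c ks' os)"
      using hd_merge_ge[OF ks', of c os] c by auto
    then show "[:fps_X ^ Suc M:] dvd [:(1 - fps_X) ^ ?e os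
        * (zeta_q (merge c ks' os) - zq_partial (merge c ks' os) (Suc M)):]"
      using zeta_q_minus_zq_partial_dvd[of "merge c ks' os" M] by (simp add: dvd_mult)
  qed
  finally show ?thesis .
qed

section \<open>The two sides of the theorem\<close>

definition lhs_form :: "nat list \<Rightarrow> (nat list \<Rightarrow> rat fps poly) \<Rightarrow> rat fps poly" where
  "lhs_form ks Z = (\<Sum>i<length ks. \<Sum>j<ks ! i - 1. Z (split_entry ks i j))"

definition rhs_form :: "nat list \<Rightarrow> (nat list \<Rightarrow> rat fps poly) \<Rightarrow> rat fps poly" where
  "rhs_form ks Z =
     (\<Sum>i<length ks. (1 + of_int (int (ks ! i) - 2 + (if i = length ks - 1 then 1 else 0)) * tvar)
        * Z (incr_entry ks i))
     + tvar * (tvar - 1) * (\<Sum>i<length ks - 1. Z (join_entries ks 1 i))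
     + [:1 - fps_X:] * ((\<Sum>i<length ks. tvar * of_nat (ks ! i - 1) * Z ks)
        + tvar * (tvar - 1) * (\<Sum>i<length ks - 1. Z (join_entries ks 0 i)))"

lemma lhs_form_diff: "lhs_form ks (\<lambda>L. f L - g L) = lhs_form ks f - lhs_form ks g"
  by (simp add: lhs_form_def sum_subtractf)

lemma rhs_form_diff: "rhs_form ks (\<lambda>L. f L - g L) = rhs_form ks f - rhs_form ks g"
proof -
  have sum_mult_diff: "(\<Sum>i\<in>I. c i * (f' i - g' i)) = (\<Sum>i\<in>I. c i * f' i) - (\<Sum>i\<in>I. c i * g' i)"
    for I and c f' g' :: "nat \<Rightarrow> rat fps poly"
    by (simp add: right_diff_distrib sum_subtractf)
  have linear: "(a - a') + T * (b - b') + H * ((c - c') + T * (d - d'))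
      = (a + T * b + H * (c + T * d)) - (a' + T * b' + H * (c' + T * d'))"
    for a a' b b' c c' d d' T H :: "rat fps poly"
    by (simp add: algebra_simps)
  show ?thesis
    unfolding rhs_form_def sum_mult_diff sum_subtractf by (rule linear)
qed

definition admissible :: "nat list \<Rightarrow> bool" where
  "admissible ks \<longleftrightarrow> ks \<noteq> [] \<and> hd ks \<ge> 2 \<and> (\<forall>k\<in>set ks. k \<ge> 1)"

lemma admissible_split_entry:
  assumes "admissible ks" "i < length ks" "j < ks ! i - 1"
  shows "admissible (split_entry ks i j)"
proof -
  have "\<forall>k\<in>set (split_entry ks i j). k \<ge> 1"
    using assms set_take_subset[of i ks] set_drop_subset[of "Suc i" ks]
    unfolding admissible_def split_entry_def by auto
  moreover have "hd (split_entry ks i j) \<ge> 2"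
    using assms unfolding admissible_def split_entry_def by (cases i) (auto simp: hd_conv_nth nth_append)
  ultimately show ?thesis
    by (simp add: admissible_def split_entry_def)
qed

lemma admissible_incr_entry:
  assumes "admissible ks" "i < length ks"
  shows "admissible (incr_entry ks i)"
proof -
  have "\<forall>k\<in>set (incr_entry ks i). k \<ge> 1"
    using assms set_update_subset_insert[of ks i "Suc (ks ! i)"]
    unfolding admissible_def incr_entry_def by auto
  moreover have "hd (incr_entry ks i) \<ge> 2"
    using assms unfolding admissible_def incr_entry_def by (cases i) (auto simp: hd_conv_nth)
  ultimately show ?thesis
    using assms by (simp add: admissible_def incr_entry_def)
qed

lemma admissible_join_entries:
  assumes "admissible ks" "i < length ks - 1"
  shows "admissible (join_entries ks e i)"
proof -
  have ks: "\<forall>k\<in>set ks. k \<ge> 1"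
    using assms by (simp add: admissible_def)
  moreover have "ks ! i \<in> set ks"
    using assms(2) by simp
  ultimately have "ks ! i + ks ! Suc i + e \<ge> 1"
    by auto
  then have "\<forall>k\<in>set (join_entries ks e i). k \<ge> 1"
    using ks set_take_subset[of i ks] set_drop_subset[of "Suc (Suc i)" ks]
    unfolding join_entries_def by auto
  moreover have "hd (join_entries ks e i) \<ge> 2"
    using assms unfolding admissible_def join_entries_def by (cases i) (auto simp: hd_conv_nth nth_append)
  ultimately show ?thesis
    by (simp add: admissible_def join_entries_def)
qed

lemma lhs_form_dvd: "admissible ks \<Longrightarrow> (\<And>L. admissible L \<Longrightarrow> d dvd Z L) \<Longrightarrow> d dvd lhs_form ks Z"
  unfolding lhs_form_def by (intro dvd_sum) (simp add: admissible_split_entry)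

lemma rhs_form_dvd: "admissible ks \<Longrightarrow> (\<And>L. admissible L \<Longrightarrow> d dvd Z L) \<Longrightarrow> d dvd rhs_form ks Z"
  unfolding rhs_form_def
  by (intro dvd_add dvd_mult dvd_sum) (simp_all add: admissible_incr_entry admissible_join_entries)

lemma lhs_form_zt_trunc: "lhs_form ks (zt_trunc M) = (\<Sum>n\<in>{1..M}. lhs_at ks n)"
  unfolding lhs_form_def zt_trunc_def lhs_at_def
  by (subst sum.swap, subst (2) sum.swap) (rule refl)

lemma of_int_coefficient_eq:
  "k \<ge> 1 \<Longrightarrow> (1 + of_int (int k - 2 + (if b then 1 else 0)) * tvar :: rat fps poly)
     = tvar * of_nat (k - 1) + (1 - tvar + (if b then tvar else 0))"
  by (cases k) (auto simp: algebra_simps of_nat_diff)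

lemma sum_of_int_coefficient_eq:
  assumes "\<forall>k\<in>set ks. k \<ge> 1"
  shows "(\<Sum>i<length ks.
            (1 + of_int (int (ks ! i) - 2 + (if i = length ks - 1 then 1 else 0)) * tvar) * Z i)
       = (\<Sum>i<length ks.
            (tvar * of_nat (ks ! i - 1) + (1 - tvar + (if i = length ks - 1 then tvar else 0))) * Z i)"
proof (rule sum.cong[OF refl])
  fix i assume "i \<in> {..<length ks}"
  then have "ks ! i \<ge> 1"
    using assms by simp
  then show "(1 + of_int (int (ks ! i) - 2 + (if i = length ks - 1 then 1 else 0)) * tvar) * Z i
      = (tvar * of_nat (ks ! i - 1) + (1 - tvar + (if i = length ks - 1 then tvar else 0))) * Z i"
    by (simp only: of_int_coefficient_eq)
qed

lemma sum_rhs_incr_at: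
  "(\<Sum>n\<in>{1..M}. rhs_incr_at ks i n)
     = (tvar * of_nat (ks ! i - 1) + (1 - tvar + (if i = length ks - 1 then tvar else 0)))
         * zt_trunc M (incr_entry ks i)
       + [:1 - fps_X:] * (tvar * of_nat (ks ! i - 1) * zt_trunc M ks)"
proof -
  have "(\<Sum>n\<in>{1..M}. rhs_incr_at ks i n) = tvar * of_nat (ks ! i - 1)
      * (zt_trunc M (incr_entry ks i) + c_one_minus_q * zt_trunc M ks)
      + (1 - tvar + (if i = length ks - 1 then tvar else 0)) * zt_trunc M (incr_entry ks i)"
    by (simp add: rhs_incr_at_def zt_trunc_def sum.distrib sum_distrib_left distrib_left mult.assoc)
  then show ?thesis
    by (simp add: c_one_minus_q_def one_minus_q_def algebra_simps)
qed

lemma sum_rhs_join_at: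
  "(\<Sum>n\<in>{1..M}. rhs_join_at ks i n)
     = zt_trunc M (join_entries ks 1 i) + [:1 - fps_X:] * zt_trunc M (join_entries ks 0 i)"
  by (simp add: rhs_join_at_def zt_trunc_def c_one_minus_q_def one_minus_q_def sum.distrib
      sum_distrib_left)

lemma sum_rhs_at:
  "(\<Sum>n\<in>{1..M}. rhs_at ks n) = (\<Sum>i<length ks. \<Sum>n\<in>{1..M}. rhs_incr_at ks i n)
     + tvar * (tvar - 1) * (\<Sum>i<length ks - 1. \<Sum>n\<in>{1..M}. rhs_join_at ks i n)"
proof -
  have "(\<Sum>n\<in>{1..M}. rhs_at ks n) = (\<Sum>n\<in>{1..M}. \<Sum>i<length ks. rhs_incr_at ks i n)
      + tvar * (tvar - 1) * (\<Sum>n\<in>{1..M}. \<Sum>i<length ks - 1. rhs_join_at ks i n)"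
    by (simp add: rhs_at_def sum.distrib sum_distrib_left)
  then show ?thesis
    by (simp only: sum.swap[of _ "{1..M}"])
qed

lemma rhs_form_zt_trunc:
  assumes "\<forall>k\<in>set ks. k \<ge> 1"
  shows "rhs_form ks (zt_trunc M) = (\<Sum>n\<in>{1..M}. rhs_at ks n)"
proof -
  have linear: "A + H * B + T * (C + H * D) = A + T * C + H * (B + T * D)"
    for A B C D H T :: "rat fps poly"
    by (simp add: algebra_simps)
  show ?thesis
    unfolding rhs_form_def sum_of_int_coefficient_eq[OF assms] sum_rhs_at sum_rhs_incr_at sum_rhs_join_at
    by (simp only: sum.distrib sum_distrib_left[symmetric]) (rule linear[symmetric])
qed

lemma lhs_form_eq_rhs_form:
  assumes "admissible ks"
  shows "lhs_form ks zeta_qt = rhs_form ks zeta_qt"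
proof -
  have ks: "ks \<noteq> []" "hd ks \<ge> 2" "\<forall>k\<in>set ks. k \<ge> 1"
    using assms by (auto simp: admissible_def)
  have "lhs_form ks zeta_qt - rhs_form ks zeta_qt = 0"
  proof (rule fps_poly_eq_0_if_X_power_dvd)
    fix M
    let ?tail = "\<lambda>L. zeta_qt L - zt_trunc M L"
    have tail: "[:fps_X ^ Suc M:] dvd ?tail L" if "admissible L" for L
      using that zeta_qt_minus_zt_trunc_dvd by (simp add: admissible_def)
    have "lhs_form ks zeta_qt - rhs_form ks zeta_qt
        = (lhs_form ks ?tail - rhs_form ks ?tail) + (lhs_form ks (zt_trunc M) - rhs_form ks (zt_trunc M))"
      by (simp add: lhs_form_diff rhs_form_diff)
    also have "lhs_form ks (zt_trunc M) - rhs_form ks (zt_trunc M) = (\<Sum>n\<in>{1..M}. err_at (zt_top ks) n)"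
      unfolding lhs_form_zt_trunc rhs_form_zt_trunc[OF ks(3)] sum_subtractf[symmetric]
      by (intro sum.cong refl) (simp add: lhs_at_eq[OF ks(1,3)])
    finally have "[:fps_X ^ Suc M:] dvd lhs_form ks zeta_qt - rhs_form ks zeta_qt"
      by (simp only: dvd_add dvd_diff lhs_form_dvd[OF assms tail] rhs_form_dvd[OF assms tail]
          sum_err_at_dvd[OF ks(1,2)])
    then show "[:fps_X ^ M:] dvd lhs_form ks zeta_qt - rhs_form ks zeta_qt"
      by (rule dvd_trans[rotated]) (simp add: le_imp_power_dvd)
  qed
  then show ?thesis
    by simp
qed

theorem theorem4p1:
  fixes ks :: "nat list"
  assumes "ks \<noteq> []" and "\<forall>k\<in>set ks. 1 \<le> k" and "2 \<le> ks ! 0"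
  shows "(\<Sum>i<length ks. \<Sum>j<ks!i - 1.
            zeta_qt (take i ks @ [ks!i - j, j + 1] @ drop (i + 1) ks))
       = (\<Sum>i<length ks.
            (1 + of_int (int (ks!i) - 2 + (if i = length ks - 1 then 1 else 0)) * tvar)
              * zeta_qt (ks[i := ks!i + 1]))
         + tvar * (tvar - 1) * (\<Sum>i<length ks - 1.
              zeta_qt (take i ks @ [ks!i + ks!(i+1) + 1] @ drop (i + 2) ks))
         + [: 1 - fps_X :] *
             ((\<Sum>i<length ks. tvar * of_nat (ks!i - 1) * zeta_qt ks)
              + tvar * (tvar - 1) * (\<Sum>i<length ks - 1.
                   zeta_qt (take i ks @ [ks!i + ks!(i+1)] @ drop (i + 2) ks)))"
proof -
  have "admissible ks"
    using assms by (simp add: admissible_def hd_conv_nth)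
  moreover have "take i ks @ [ks!i - j, j + 1] @ drop (i + 1) ks = split_entry ks i j" for i j
    by (simp add: split_entry_def)
  moreover have "ks[i := ks!i + 1] = incr_entry ks i" for i
    by (simp add: incr_entry_def)
  moreover have "take i ks @ [ks!i + ks!(i+1) + e] @ drop (i + 2) ks = join_entries ks e i" for i e
    by (simp add: join_entries_def numeral_2_eq_2)
  moreover have "take i ks @ [ks!i + ks!(i+1)] @ drop (i + 2) ks = join_entries ks 0 i" for i
    by (simp add: join_entries_def numeral_2_eq_2)
  ultimately show ?thesis
    using lhs_form_eq_rhs_form unfolding lhs_form_def rhs_form_def by presburger
qed

end
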